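(* Let $f:2^V\to\mathbb R_{\ge0}$ be a (not necessarily monotone) submodular function, let $P_1,\dots,P_k$ be a partition of $V$ with budgets $n_1,\dots,n_k$, and let $S^*$ maximize $f$ over sets $S\subseteq V$ with $|S\cap P_a|\le n_a$ for all $a$. Run Algorithm 4 with sampling probability $p\in(0,1)$ and parameters $d_a>0$. Let $$Q_a=\max\Big\{1+c_a+d_a,\ \Big(1-\frac1{n_a}\Big)c_a+\frac1p\Big\},\qquad Q=\max_{a\in[k]}Q_a.$$ Then $\mathbb E[f(S)]\ge\frac{1-p}{Q}\,f(S^* )$ for the output $S$.
   Context: Algorithm 4. The elements of $V$ are labeled $1,\dots,m$ in arbitrary arrival order. Given $p\in(0,1)$ and $d_a>0$, set $c_a=(1+d_a)/\big((1+d_a/n_a)^{n_a}-1\big)$ and $g_a(i)=\frac{c_a}{n_a}(1+d_a/n_a)^{i-1}$ for $i\in[n_a]$. Maintain $S$, initially $\emptyset$, and thresholds $\beta_a=0$. For $t=1,\dots,m$: let $a$ be the index with $t\in P_a$, compute $w_t=f(S\cup\{t\})-f(S)$ (for the current $S$), and draw $Z_t\sim\mathrm{Bernoulli}(p)$ independently of everything else; if $w_t\ge\beta_a$ and $Z_t=1$, then: if $|S\cap P_a|<n_a$ add $t$ to $S$, otherwise remove from $S$ an element $t'\in S\cap P_a$ minimizing $w_{t'}$ and add $t$; then set $\beta_a=\sum_{i=1}^{n_a}w_a(i)g_a(i)$, where $w_a(i)$ is the $i$-th largest value in $\{w_s:s\in S\cap P_a\}$ ($0$ if $i>|S\cap P_a|$).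 Weights are never recomputed. Otherwise $t$ is discarded. Output the final $S$. *)

theory Defs
  imports "HOL-Probability.Probability"
begin

text \<open>Ground set V = {1..m}; partition blocks P a for a in {1..k}; budgets n a; parameters d a.\<close>

definition c_par :: "real \<Rightarrow> nat \<Rightarrow> real" where
  "c_par d n = (1 + d) / ((1 + d / real n) ^ n - 1)"

definition g_par :: "real \<Rightarrow> nat \<Rightarrow> nat \<Rightarrow> real" where
  "g_par d n i = c_par d n / real n * (1 + d / real n) ^ (i - 1)"

text \<open>i-th largest value (1-indexed) of the multiset of weights of a finite set A; 0 if i > card A.\<close>
definition ith_largest :: "(nat \<Rightarrow> real) \<Rightarrow> nat set \<Rightarrow> nat \<Rightarrow> real" where
  "ith_largest w A i =
     (let L = rev (sort (map w (sorted_list_of_set A))) in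
      if 1 \<le> i \<and> i \<le> length L then L ! (i - 1) else 0)"

definition threshold :: "real \<Rightarrow> nat \<Rightarrow> (nat \<Rightarrow> real) \<Rightarrow> nat set \<Rightarrow> real" where
  "threshold d n w A = (\<Sum>i=1..n. ith_largest w A i * g_par d n i)"

definition block_of :: "(nat \<Rightarrow> nat set) \<Rightarrow> nat \<Rightarrow> nat \<Rightarrow> nat" where
  "block_of P k t = (THE a. a \<in> {1..k} \<and> t \<in> P a)"

text \<open>One step of Algorithm 4. State: (S, recorded weights w, thresholds beta).
  tb S w t is the (arbitrary) tie-breaking rule choosing the element to evict.\<close>
definition alg_step ::
  "(nat set \<Rightarrow> real) \<Rightarrow> (nat \<Rightarrow> nat set) \<Rightarrow> nat \<Rightarrow> (nat \<Rightarrow> nat) \<Rightarrow> (nat \<Rightarrow> real)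
   \<Rightarrow> (nat set \<Rightarrow> (nat \<Rightarrow> real) \<Rightarrow> nat \<Rightarrow> nat) \<Rightarrow> (nat \<Rightarrow> bool)
   \<Rightarrow> nat \<Rightarrow> nat set \<times> (nat \<Rightarrow> real) \<times> (nat \<Rightarrow> real) \<Rightarrow> nat set \<times> (nat \<Rightarrow> real) \<times> (nat \<Rightarrow> real)"
  where
  "alg_step f P k n d tb Z t st =
     (case st of (S, w, \<beta>) \<Rightarrow>
       (let a = block_of P k t;
            wt = f (S \<union> {t}) - f S
        in if wt \<ge> \<beta> a \<and> Z t then
             (let w' = w(t := wt);
                  S' = (if card (S \<inter> P a) < n a then insert t S
                        else insert t (S - {tb S w t}))
              in (S', w', \<beta>(a := threshold (d a) (n a) w' (S' \<inter> P a))))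
           else (S, w, \<beta>)))"

definition alg_output ::
  "(nat set \<Rightarrow> real) \<Rightarrow> (nat \<Rightarrow> nat set) \<Rightarrow> nat \<Rightarrow> (nat \<Rightarrow> nat) \<Rightarrow> (nat \<Rightarrow> real)
   \<Rightarrow> (nat set \<Rightarrow> (nat \<Rightarrow> real) \<Rightarrow> nat \<Rightarrow> nat) \<Rightarrow> nat \<Rightarrow> (nat \<Rightarrow> bool) \<Rightarrow> nat set"
  where
  "alg_output f P k n d tb m Z =
     fst (fold (alg_step f P k n d tb Z) [1..<m+1] ({}, (\<lambda>_. 0), (\<lambda>_. 0)))"

definition submodular_on :: "'a set \<Rightarrow> ('a set \<Rightarrow> real) \<Rightarrow> bool" where
  "submodular_on V f \<longleftrightarrow>
     (\<forall>A B. A \<subseteq> V \<longrightarrow> B \<subseteq> V \<longrightarrow> f (A \<union> B) + f (A \<inter> B) \<le> f A + f B)"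

definition Q_par :: "real \<Rightarrow> real \<Rightarrow> nat \<Rightarrow> real" where
  "Q_par p d n = max (1 + c_par d n + d) ((1 - 1 / real n) * c_par d n + 1 / p)"

end

theory Submission
  imports Defs
begin

text \<open>
  Fix the outcomes Z of the coins. For a block a let W_a be the total recorded gain of the kept
  elements, X_a that of all accepted elements, E_a the total excess of the accepted elements
  over the thresholds they faced, and beta_a the current threshold. Every acceptance into the
  block preserves the potential inequality X_a + n_a beta_a + d_a E_a <= (1 + c_a + d_a) W_a.
  On the descending list of kept weights, beta_a is a power-weighted sum with ratio
  1 + d_a / n_a, and the preservation of the potential is an exchange inequality in which,
  thanks to the choice of c_a, the evicted weight cancels.

  Each element is accepted with probability at most p, hence E f(S* \<union> A) >= (1 - p) f(S*)
  for the set A of accepted elements. By submodularity, f(S* \<union> A) is at most f({}) plus the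
  gains of A, the thresholds seen by the elements of S* outside A, and the excess gains of the
  elements of S* that only their coin rejected. Flipping the coin of such an element turns the
  expected value of the last term into (1/p - 1) times the expected excess of the accepted
  elements of S*. The potential inequality bounds all of this by Q_a W_a in every block, and
  the sum of the W_a is at most f(S) - f({}) for the output S.
\<close>

section \<open>Lists sorted in descending order\<close>

lemma sorted_desc_unique:
  fixes xs ys :: "real list"
  assumes "sorted_wrt (\<ge>) xs" "sorted_wrt (\<ge>) ys" "mset xs = mset ys"
  shows "xs = ys"
proof -
  have "sort (rev ys) = rev xs" "sort (rev ys) = rev ys"
    using assms by (simp_all add: properties_for_sort sorted_wrt_rev)
  then show ?thesis by simp
qed

lemma sorted_desc_insort:
  "sorted_wrt (\<ge>) xs \<Longrightarrow> sorted_wrt (\<ge>) (insort_key uminus (x::real) xs)"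
  using sorted_insort_key[of uminus x xs] by (simp add: sorted_map)

lemma insort_desc_append_zeros:
  "(0::real) \<le> x \<Longrightarrow> insort_key uminus x (xs @ replicate j 0) = insort_key uminus x xs @ replicate j 0"
  by (induction xs) (cases j; simp)+

lemma insort_desc_split:
  fixes x :: real
  assumes "sorted_wrt (\<ge>) xs"
  obtains T D where "xs = T @ D" "insort_key uminus x xs = T @ x # D"
    "\<forall>v\<in>set T. x \<le> v" "\<forall>v\<in>set D. v \<le> x"
  using assms
proof (induction xs arbitrary: thesis)
  case Nil
  then show ?case by simp
next
  case (Cons v xs)
  show ?case
  proof (cases "v \<le> x")
    case True
    then show ?thesis using Cons.prems by (intro Cons.prems(1)[of "[]" "v # xs"]) auto
  next
    case False
    obtain T D where "xs = T @ D" "insort_key uminus x xs = T @ x # D"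
      "\<forall>v\<in>set T. x \<le> v" "\<forall>v\<in>set D. v \<le> x"
      using Cons.IH Cons.prems(2) by auto
    then show ?thesis using False by (intro Cons.prems(1)[of "v # T" D]) auto
  qed
qed

lemma sorted_desc_last_le:
  fixes V :: "real list"
  assumes "sorted_wrt (\<ge>) V" and "y \<in> set V"
  shows "last V \<le> y"
  using assms by (cases V rule: rev_cases) (auto simp: sorted_wrt_append)

lemma sorted_desc_replicate_0: "sorted_wrt (\<ge>) (replicate j (0::real))"
  by (induction j) auto

lemma list_all2_shift_sorted_desc:
  fixes D :: "real list"
  assumes "sorted_wrt (\<ge>) (D @ [L])" and "hd (D @ [L]) \<le> x"
  shows "list_all2 (\<le>) (D @ [L]) (x # D)"
  using assms
proof (induction D arbitrary: x)
  case (Cons v D)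
  then have "list_all2 (\<le>) (D @ [L]) (v # D)"
    by (cases D) auto
  then show ?case using Cons.prems by simp
qed simp

section \<open>Power-weighted sums\<close>

fun power_weighted :: "real \<Rightarrow> real list \<Rightarrow> real" where
  "power_weighted r [] = 0"
| "power_weighted r (x # xs) = x + r * power_weighted r xs"

lemma power_weighted_append:
  "power_weighted r (xs @ ys) = power_weighted r xs + r ^ length xs * power_weighted r ys"
  by (induction xs) (simp_all add: algebra_simps)

lemma power_weighted_replicate_0 [simp]: "power_weighted r (replicate j 0) = 0"
  by (induction j) simp_all

lemma power_weighted_conv_sum: "power_weighted r xs = (\<Sum>i<length xs. xs ! i * r ^ i)"
  by (induction xs) (simp_all del: sum.lessThan_Suc add: sum.lessThan_Suc_shift sum_distrib_left algebra_simps)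

lemma power_weighted_mono:
  assumes "list_all2 (\<le>) xs ys" and "r \<ge> 0"
  shows "power_weighted r xs \<le> power_weighted r ys"
  using assms(1) by (induction rule: list_all2_induct) (simp_all add: add_mono mult_left_mono assms(2))

lemma power_weighted_lower_bound:
  assumes "\<forall>v\<in>set xs. x \<le> v" and "r \<ge> 0"
  shows "x * (\<Sum>i<length xs. r ^ i) \<le> power_weighted r xs"
  using assms(1)
proof (induction xs)
  case (Cons v xs)
  have "x * (\<Sum>i<length (v # xs). r ^ i) = x + r * (x * (\<Sum>i<length xs. r ^ i))"
    by (simp del: sum.lessThan_Suc add: sum.lessThan_Suc_shift sum_distrib_left algebra_simps)
  also have "\<dots> \<le> v + r * power_weighted r xs"
    using Cons assms(2) by (intro add_mono mult_left_mono) auto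
  finally show ?case by simp
qed simp

lemma power_weighted_nonneg: "\<forall>v\<in>set xs. 0 \<le> v \<Longrightarrow> r \<ge> 0 \<Longrightarrow> 0 \<le> power_weighted r xs"
  using power_weighted_lower_bound[of xs 0 r] by simp

section \<open>The thresholds of a block\<close>

lemma c_par_pos: "n \<ge> 1 \<Longrightarrow> d > 0 \<Longrightarrow> c_par d n > 0"
  by (simp add: c_par_def)

lemma c_par_mult_power_diff_1:
  assumes "n \<ge> 1" and "d > 0"
  shows "c_par d n * ((1 + d / real n) ^ n - 1) = 1 + d"
proof -
  have "1 < (1 + d / real n) ^ n"
    using assms by (intro one_less_power) auto
  then show ?thesis by (simp add: c_par_def)
qed

lemma g_par_Suc: "g_par d n (Suc i) = c_par d n / real n * (1 + d / real n) ^ i"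
  by (simp add: g_par_def)

lemma Q_par_ge_1: "n \<ge> 1 \<Longrightarrow> d > 0 \<Longrightarrow> 1 \<le> Q_par p d n"
  using c_par_pos[of n d] by (simp add: Q_par_def)

definition threshold_list :: "real \<Rightarrow> nat \<Rightarrow> real list \<Rightarrow> real" where
  "threshold_list d n xs = c_par d n / real n * power_weighted (1 + d / real n) xs"

lemma threshold_list_append_zeros [simp]:
  "threshold_list d n (xs @ replicate j 0) = threshold_list d n xs"
  by (simp add: threshold_list_def power_weighted_append)

lemma threshold_list_nonneg:
  "n \<ge> 1 \<Longrightarrow> d > 0 \<Longrightarrow> \<forall>v\<in>set xs. 0 \<le> v \<Longrightarrow> 0 \<le> threshold_list d n xs"
  unfolding threshold_list_def
  by (intro mult_nonneg_nonneg divide_nonneg_nonneg power_weighted_nonneg)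
     (auto simp: c_par_pos less_imp_le)

definition desc_weights :: "(nat \<Rightarrow> real) \<Rightarrow> nat set \<Rightarrow> real list" where
  "desc_weights w T = rev (sort (map w (sorted_list_of_set T)))"

lemma length_desc_weights [simp]: "length (desc_weights w T) = card T"
  by (simp add: desc_weights_def)

lemma set_desc_weights [simp]: "finite T \<Longrightarrow> set (desc_weights w T) = w ` T"
  by (simp add: desc_weights_def)

lemma mset_desc_weights: "finite T \<Longrightarrow> mset (desc_weights w T) = image_mset w (mset_set T)"
  unfolding desc_weights_def
  by (simp add: mset_map) (metis mset_sorted_list_of_multiset sorted_list_of_mset_set)

lemma sorted_desc_weights: "sorted_wrt (\<ge>) (desc_weights w T)"
  by (simp add: desc_weights_def sorted_wrt_rev)

lemma threshold_conv_threshold_list: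
  assumes "card T \<le> n"
  shows "threshold d n w T = threshold_list d n (desc_weights w T)"
proof -
  define V where "V = desc_weights w T @ replicate (n - card T) 0"
  have "threshold d n w T = (\<Sum>i<n. ith_largest w T (Suc i) * g_par d n (Suc i))"
    by (simp add: threshold_def sum.atLeast1_atMost_eq)
  also have "\<dots> = c_par d n / real n * (\<Sum>i<n. V ! i * (1 + d / real n) ^ i)"
    unfolding sum_distrib_left g_par_Suc
    using assms by (intro sum.cong) (auto simp: ith_largest_def V_def nth_append Let_def
        desc_weights_def[symmetric])
  also have "\<dots> = threshold_list d n V"
    using assms by (simp add: threshold_list_def power_weighted_conv_sum V_def)
  finally show ?thesis by (simp add: V_def)
qed

lemma threshold_cong:
  assumes "\<forall>s\<in>T. w s = w' s"
  shows "threshold d n w T = threshold d n w' T"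
proof -
  have "map w (sorted_list_of_set T) = map w' (sorted_list_of_set T)"
    using assms by (cases "finite T") auto
  then show ?thesis unfolding threshold_def ith_largest_def by (simp only:)
qed

text \<open>The coefficient of L vanishes because c r^n = 1 + c + d: the evicted weight L does not
  enter the bound.\<close>

lemma exchange_inequality:
  fixes c d r x L G E :: real and t l n :: nat
  assumes n: "n = t + l + 1" and r: "real n * (r - 1) = d" and c: "c * r ^ n = 1 + c + d"
    and c_nonneg: "0 \<le> c" and G: "(r ^ t - 1) * x \<le> (r - 1) * G"
  defines "\<beta> \<equiv> c / real n * (G + r ^ t * (E + r ^ l * L))"
    and "\<beta>' \<equiv> c / real n * (G + r ^ t * (x + r * E))"
  shows "x + d * (x - \<beta>) \<le> (1 + c + d) * (x - L) - real n * (\<beta>' - \<beta>)"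
proof -
  have n_pos: "real n > 0" using n by simp
  have rn: "r ^ n = r ^ t * r ^ l * r" using n by (simp add: power_add)
  have "(1 + c + d) * (x - L) - n * (\<beta>' - \<beta>) - (x + d * (x - \<beta>))
      = c * ((r - 1) * G - (r ^ t - 1) * x) + (c * r ^ n - (1 + c + d)) * L"
    unfolding \<beta>_def \<beta>'_def r[symmetric] rn using n_pos
    by (simp add: field_simps)
  also have "\<dots> = c * ((r - 1) * G - (r ^ t - 1) * x)" using c by simp
  also have "\<dots> \<ge> 0" using c_nonneg G by simp
  finally show ?thesis by simp
qed

lemma threshold_list_last_le:
  assumes n: "n \<ge> 1" and d: "d > 0" and len: "length ys + 1 = n"
    and sorted: "sorted_wrt (\<ge>) (ys @ [L])" and L: "0 \<le> L"
  shows "L \<le> threshold_list d n (ys @ [L])"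
proof -
  define r where "r = 1 + d / real n"
  define c where "c = c_par d n"
  have r1: "r \<ge> 1" using d by (simp add: r_def)
  have len': "length (ys @ [L]) = n" using len by simp
  have "L * (\<Sum>i<length (ys @ [L]). r ^ i) \<le> power_weighted r (ys @ [L])"
    using sorted r1 by (intro power_weighted_lower_bound) (auto simp: sorted_wrt_append)
  then have bound: "c / n * (L * (\<Sum>i<n. r ^ i)) \<le> threshold_list d n (ys @ [L])"
    unfolding len' threshold_list_def c_def[symmetric] r_def[symmetric]
    using c_par_pos[OF n d] by (intro mult_left_mono) (auto simp: c_def)
  have geom: "c / n * (\<Sum>i<n. r ^ i) = (1 + d) / d"
  proof -
    have "c * (d / n * (\<Sum>i<n. r ^ i)) = 1 + d"
      using c_par_mult_power_diff_1[OF n d] by (simp add: power_diff_1_eq r_def c_def)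
    then show ?thesis using d by (simp add: field_simps)
  qed
  have "L \<le> L * ((1 + d) / d)" using L d by (simp add: field_simps)
  also have "\<dots> = c / n * (L * (\<Sum>i<n. r ^ i))"
    unfolding geom[symmetric] by (simp add: algebra_simps)
  finally show ?thesis using bound by simp
qed

lemma threshold_list_insort_mono:
  assumes n: "n \<ge> 1" and d: "d > 0"
    and sorted: "sorted_wrt (\<ge>) (ys @ [L])" and x: "L \<le> x"
  shows "threshold_list d n (ys @ [L]) \<le> threshold_list d n (insort_key uminus x ys)"
proof -
  have "sorted_wrt (\<ge>) ys" using sorted by (simp add: sorted_wrt_append)
  then obtain T D where split: "ys = T @ D" "insort_key uminus x ys = T @ x # D"
    and D: "\<forall>v\<in>set D. v \<le> x"
    using insort_desc_split by blast
  have "hd (D @ [L]) \<le> x" using D x by (cases D) auto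
  then have "list_all2 (\<le>) (D @ [L]) (x # D)"
    using sorted split by (intro list_all2_shift_sorted_desc) (auto simp: sorted_wrt_append)
  then have "list_all2 (\<le>) (T @ D @ [L]) (T @ x # D)"
    by (simp add: list_all2_appendI list_all2_refl)
  then have "power_weighted (1 + d / real n) (ys @ [L])
      \<le> power_weighted (1 + d / real n) (insort_key uminus x ys)"
    using split d by (simp add: power_weighted_mono)
  then show ?thesis unfolding threshold_list_def
    using c_par_pos[OF n d] by (intro mult_left_mono) auto
qed

lemma threshold_list_insort_ge:
  assumes n: "n \<ge> 1" and d: "d > 0" and sorted: "sorted_wrt (\<ge>) ys"
    and nonneg: "\<forall>v\<in>set ys. 0 \<le> v" and x: "0 \<le> x"
  shows "c_par d n / real n * x \<le> threshold_list d n (insort_key uminus x ys)"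
proof -
  define r where "r = 1 + d / real n"
  have r1: "r \<ge> 1" using d by (simp add: r_def)
  obtain T D where split: "ys = T @ D" "insort_key uminus x ys = T @ x # D"
    using insort_desc_split[OF sorted] .
  have "0 \<le> power_weighted r T" "0 \<le> power_weighted r D"
    using nonneg split r1 by (auto intro!: power_weighted_nonneg)
  moreover have "x \<le> r ^ length T * x" using r1 x by (simp add: mult_le_cancel_right1)
  moreover have "power_weighted r (insort_key uminus x ys)
      = power_weighted r T + r ^ length T * x + r ^ length T * (r * power_weighted r D)"
    unfolding split(2) by (simp add: power_weighted_append algebra_simps)
  moreover have "0 \<le> r ^ length T * (r * power_weighted r D)"
    using r1 \<open>0 \<le> power_weighted r D\<close> by simp
  ultimately have "x \<le> power_weighted r (insort_key uminus x ys)" by linarith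
  then show ?thesis unfolding threshold_list_def r_def[symmetric]
    using c_par_pos[OF n d] by (intro mult_left_mono) auto
qed

lemma threshold_list_exchange:
  fixes ys :: "real list" and L x d :: real
  assumes n: "n \<ge> 1" and d: "d > 0" and len: "length ys + 1 = n"
    and sorted: "sorted_wrt (\<ge>) ys"
  defines "\<beta> \<equiv> threshold_list d n (ys @ [L])"
    and "\<beta>' \<equiv> threshold_list d n (insort_key uminus x ys)"
  shows "x + d * (x - \<beta>) \<le> (1 + c_par d n + d) * (x - L) - real n * (\<beta>' - \<beta>)"
proof -
  define r where "r = 1 + d / real n"
  define c where "c = c_par d n"
  have r1: "r \<ge> 1" and nr: "real n * (r - 1) = d" using n d by (simp_all add: r_def)
  have c_pos: "c > 0" using c_par_pos[OF n d] by (simp add: c_def)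
  have c_geom: "c * r ^ n = 1 + c + d"
    using c_par_mult_power_diff_1[OF n d] by (simp add: c_def r_def algebra_simps)
  obtain T D where split: "ys = T @ D" "insort_key uminus x ys = T @ x # D"
    and T: "\<forall>v\<in>set T. x \<le> v"
    using insort_desc_split[OF sorted] .
  have G: "(r ^ length T - 1) * x \<le> (r - 1) * power_weighted r T"
  proof -
    have "(r - 1) * (x * (\<Sum>i<length T. r ^ i)) \<le> (r - 1) * power_weighted r T"
      using power_weighted_lower_bound[OF T] r1 by (intro mult_left_mono) auto
    then show ?thesis by (simp add: power_diff_1_eq algebra_simps)
  qed
  have n_eq: "n = length T + length D + 1" using len split by simp
  have \<beta>_eq: "\<beta> = c / n * (power_weighted r T + r ^ length T * (power_weighted r D + r ^ length D * L))"
    and \<beta>'_eq: "\<beta>' = c / n * (power_weighted r T + r ^ length T * (x + r * power_weighted r D))"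
    unfolding \<beta>_def \<beta>'_def threshold_list_def split(2) unfolding split(1)
    by (simp_all add: power_weighted_append c_def r_def)
  show ?thesis
    unfolding \<beta>_eq \<beta>'_eq c_def[symmetric]
    by (rule exchange_inequality[OF n_eq nr c_geom less_imp_le[OF c_pos] G])
qed

lemma desc_weights_insert:
  assumes "finite T" and "t \<notin> T"
  shows "desc_weights (w(t := x)) (insert t T) = insort_key uminus x (desc_weights w T)"
proof (rule sorted_desc_unique)
  have "image_mset (w(t := x)) (mset_set T) = image_mset w (mset_set T)"
    using assms by (intro image_mset_cong) auto
  then show "mset (desc_weights (w(t := x)) (insert t T)) = mset (insort_key uminus x (desc_weights w T))"
    using assms by (simp add: mset_desc_weights)
qed (simp_all add: sorted_desc_weights sorted_desc_insort)

lemma desc_weights_replace_min: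
  assumes fin: "finite T" and t: "t \<notin> T" and e: "e \<in> T" "\<forall>y\<in>T. w e \<le> w y"
  defines "V \<equiv> desc_weights w T"
  shows "V = butlast V @ [w e]"
    and "desc_weights (w(t := x)) (insert t (T - {e})) = insort_key uminus x (butlast V)"
proof -
  have "length V = card T" "card T > 0" using fin e by (auto simp: V_def card_gt_0_iff)
  then have "V \<noteq> []" by auto
  then have V: "sorted_wrt (\<ge>) V" "mset V = image_mset w (mset_set T)" "V \<noteq> []"
    using fin by (simp_all add: V_def sorted_desc_weights mset_desc_weights)
  have "last V = w e"
  proof (rule antisym)
    show "last V \<le> w e" using sorted_desc_last_le[OF V(1)] e fin by (simp add: V_def)
    obtain s where "s \<in> T" "last V = w s" using V(3) fin by (auto simp: V_def dest!: last_in_set)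
    then show "w e \<le> last V" using e by simp
  qed
  then show V_split: "V = butlast V @ [w e]" using V(3) by (metis append_butlast_last_id)
  have "mset V = add_mset (w e) (image_mset w (mset_set (T - {e})))"
    using V(2) fin e by (simp add: mset_set.remove)
  then have mset_butlast: "mset (butlast V) = image_mset w (mset_set (T - {e}))"
    by (subst (asm) V_split) simp
  have "image_mset (w(t := x)) (mset_set (T - {e})) = image_mset w (mset_set (T - {e}))"
    using fin t by (intro image_mset_cong) auto
  then show "desc_weights (w(t := x)) (insert t (T - {e})) = insort_key uminus x (butlast V)"
    using fin t V(1) mset_butlast
    by (intro sorted_desc_unique sorted_desc_insort)
      (simp_all add: mset_desc_weights sorted_desc_weights butlast_conv_take sorted_wrt_take)
qed

text \<open>A block that is not full is padded with zero weights, so that both kinds of acceptance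
  replace the last entry L of a descending list of length n.\<close>

lemma desc_weights_exchange:
  fixes w :: "nat \<Rightarrow> real"
  assumes n: "n \<ge> 1" and fin: "finite T" and card: "card T \<le> n"
    and w_nonneg: "\<forall>s\<in>T. 0 \<le> w s" and t: "t \<notin> T" and x: "0 \<le> x"
    and evict: "card T = n \<longrightarrow> e \<in> T \<and> (\<forall>y\<in>T. w e \<le> w y)"
    and T': "T' = (if card T < n then insert t T else insert t (T - {e}))"
  obtains ys L where "sorted_wrt (\<ge>) (ys @ [L])" and "length ys + 1 = n" and "0 \<le> L"
    and "desc_weights w T @ replicate (n - card T) 0 = ys @ [L]"
    and "desc_weights (w(t := x)) T' @ replicate (n - card T') 0 = insort_key uminus x ys"
    and "sum (w(t := x)) T' - sum w T = x - L"
proof (cases "card T < n")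
  case True
  define V where "V = desc_weights w T"
  define ys where "ys = V @ replicate (n - 1 - card T) 0"
  have "n - card T = Suc (n - 1 - card T)" using True by simp
  then have ys_0: "V @ replicate (n - card T) 0 = ys @ [0]"
    by (simp add: ys_def replicate_append_same)
  show thesis
  proof (rule that[of ys 0])
    show "sorted_wrt (\<ge>) (ys @ [0])"
      unfolding ys_0[symmetric] using sorted_desc_weights[of w T] w_nonneg fin sorted_desc_replicate_0
      by (auto simp: sorted_wrt_append V_def)
    show "desc_weights (w(t := x)) T' @ replicate (n - card T') 0 = insort_key uminus x ys"
      using True fin t x by (simp add: T' ys_def V_def desc_weights_insert insort_desc_append_zeros)
    have "sum (w(t := x)) T = sum w T" using t by (intro sum.cong) auto
    then show "sum (w(t := x)) T' - sum w T = x - 0" using True fin t by (simp add: T')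
    show "length ys + 1 = n" using True by (simp add: ys_def V_def)
    show "desc_weights w T @ replicate (n - card T) 0 = ys @ [0]"
      unfolding V_def[symmetric] by (rule ys_0)
  qed simp
next
  case False
  define V where "V = desc_weights w T"
  have full: "card T = n" using False card by simp
  then have e: "e \<in> T" "\<forall>y\<in>T. w e \<le> w y" using evict by auto
  have card': "card T' = n" using False full fin t e n by (simp add: T' card_insert_if)
  note V_split = desc_weights_replace_min[OF fin t e, folded V_def]
  show thesis
  proof (rule that[of "butlast V" "w e"])
    show "sorted_wrt (\<ge>) (butlast V @ [w e])"
      using sorted_desc_weights[of w T] unfolding V_def[symmetric] V_split(1)[symmetric] .
    show "length (butlast V) + 1 = n" using full n by (simp add: V_def)
    have "sum (w(t := x)) (T - {e}) = sum w (T - {e})" using t by (intro sum.cong) auto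
    then show "sum (w(t := x)) T' - sum w T = x - w e"
      using False fin t e sum.remove[OF fin e(1), of w] by (simp add: T')
    show "0 \<le> w e" using w_nonneg e by simp
    have "n - card T = 0" "n - card T' = 0" using False card' full by simp_all
    then show "desc_weights w T @ replicate (n - card T) 0 = butlast V @ [w e]"
      "desc_weights (w(t := x)) T' @ replicate (n - card T') 0 = insort_key uminus x (butlast V)"
      unfolding V_def[symmetric] using V_split(2) False
      by (simp_all add: T' flip: V_split(1))
  qed
qed

lemma block_exchange:
  fixes T T' :: "nat set" and w :: "nat \<Rightarrow> real" and x d :: real and n t e :: nat
  assumes n: "n \<ge> 1" and d: "d > 0" and fin: "finite T" and card: "card T \<le> n"
    and w_nonneg: "\<forall>s\<in>T. 0 \<le> w s" and t: "t \<notin> T"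
    and evict: "card T = n \<longrightarrow> e \<in> T \<and> (\<forall>y\<in>T. w e \<le> w y)"
    and T': "T' = (if card T < n then insert t T else insert t (T - {e}))"
  defines "\<beta> \<equiv> threshold d n w T" and "\<beta>' \<equiv> threshold d n (w(t := x)) T'"
    and "\<Delta>W \<equiv> sum (w(t := x)) T' - sum w T"
  assumes x: "\<beta> \<le> x"
  shows "x + d * (x - \<beta>) \<le> (1 + c_par d n + d) * \<Delta>W - real n * (\<beta>' - \<beta>)"
    and "x - \<beta> \<le> \<Delta>W" and "\<beta> \<le> \<beta>'" and "c_par d n / real n * x \<le> \<beta>'"
    and "card T' \<le> n"
proof -
  show card': "card T' \<le> n"
    using card evict fin t n by (cases "card T < n") (auto simp: T' card_insert_if)
  have \<beta>_list: "\<beta> = threshold_list d n (desc_weights w T)"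
    using card by (simp add: \<beta>_def threshold_conv_threshold_list)
  have "0 \<le> x" using x threshold_list_nonneg[OF n d, of "desc_weights w T"] w_nonneg fin
    by (simp add: \<beta>_list)
  then obtain ys L where ys: "sorted_wrt (\<ge>) (ys @ [L])" "length ys + 1 = n" "0 \<le> L"
    "desc_weights w T @ replicate (n - card T) 0 = ys @ [L]"
    "desc_weights (w(t := x)) T' @ replicate (n - card T') 0 = insort_key uminus x ys"
    "sum (w(t := x)) T' - sum w T = x - L"
    by (rule desc_weights_exchange[OF n fin card w_nonneg t _ evict T'])
  have \<beta>: "\<beta> = threshold_list d n (ys @ [L])"
    unfolding \<beta>_list by (simp flip: ys(4))
  have \<beta>': "\<beta>' = threshold_list d n (insort_key uminus x ys)"
    unfolding \<beta>'_def threshold_conv_threshold_list[OF card'] by (simp flip: ys(5))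
  have ys_sorted: "sorted_wrt (\<ge>) ys" using ys(1) by (simp add: sorted_wrt_append)
  have L_le: "L \<le> \<beta>" unfolding \<beta> by (rule threshold_list_last_le[OF n d ys(2,1,3)])
  show "x + d * (x - \<beta>) \<le> (1 + c_par d n + d) * \<Delta>W - real n * (\<beta>' - \<beta>)"
    unfolding \<Delta>W_def ys(6) \<beta> \<beta>' by (rule threshold_list_exchange[OF n d ys(2) ys_sorted])
  show "x - \<beta> \<le> \<Delta>W" using L_le ys(6) by (simp add: \<Delta>W_def)
  show "\<beta> \<le> \<beta>'"
    unfolding \<beta> \<beta>' using L_le x by (intro threshold_list_insort_mono[OF n d ys(1)]) simp
  show "c_par d n / real n * x \<le> \<beta>'"
    unfolding \<beta>' using ys(1,3) \<open>0 \<le> x\<close>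
    by (intro threshold_list_insort_ge[OF n d ys_sorted]) (auto simp: sorted_wrt_append)
qed

lemma potential_le_Q_par:
  fixes X \<beta> E W p d :: real
  assumes potential: "X + real N * \<beta> + d * E \<le> (1 + c_par d N + d) * W"
    and E: "0 \<le> E" "E \<le> W" and d: "0 \<le> d"
  shows "X + real N * \<beta> + max (1 / p - 1 - c_par d N / real N) 0 * E \<le> Q_par p d N * W"
proof -
  define c where "c = c_par d N"
  define \<alpha> where "\<alpha> = 1 / p - 1 - c / real N"
  have W: "0 \<le> W" using E by simp
  show ?thesis
  proof (cases "max \<alpha> 0 \<le> d")
    case True
    then have "max \<alpha> 0 * E \<le> d * E" using E by (intro mult_right_mono) auto
    moreover have "(1 + c + d) * W \<le> Q_par p d N * W"
      using W by (intro mult_right_mono) (simp_all add: Q_par_def c_def)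
    ultimately show ?thesis using potential by (simp add: c_def \<alpha>_def)
  next
    case False
    then have \<alpha>: "max \<alpha> 0 = \<alpha>" "d < \<alpha>" using d by auto
    have "X + real N * \<beta> + \<alpha> * E \<le> (1 + c + d) * W + (\<alpha> - d) * W"
      using potential E \<alpha>(2) mult_left_mono[OF E(2), of "\<alpha> - d"]
      by (simp add: c_def algebra_simps)
    also have "\<dots> = ((1 - 1 / real N) * c + 1 / p) * W"
      by (simp add: \<alpha>_def algebra_simps)
    also have "\<dots> \<le> Q_par p d N * W"
      using W by (intro mult_right_mono) (simp_all add: Q_par_def c_def)
    finally show ?thesis unfolding c_def[symmetric] \<alpha>_def[symmetric] \<alpha>(1) .
  qed
qed

section \<open>Submodular functions\<close>

lemma submodular_on_marginal_antimono:
  assumes "submodular_on V f" "X \<subseteq> Y" "Y \<subseteq> V" "u \<in> V" "u \<notin> Y"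
  shows "f (Y \<union> {u}) - f Y \<le> f (X \<union> {u}) - f X"
proof -
  have "X \<union> {u} \<subseteq> V" using assms by auto
  then have "f ((X \<union> {u}) \<union> Y) + f ((X \<union> {u}) \<inter> Y) \<le> f (X \<union> {u}) + f Y"
    using assms(1,3) unfolding submodular_on_def by blast
  moreover have "(X \<union> {u}) \<union> Y = Y \<union> {u}" "(X \<union> {u}) \<inter> Y = X" using assms by auto
  ultimately show ?thesis by simp
qed

lemma submodular_on_union_left:
  assumes "submodular_on V f" and "S \<subseteq> V"
  shows "submodular_on V (\<lambda>X. f (S \<union> X))"
  unfolding submodular_on_def
proof (intro allI impI)
  fix A B assume "A \<subseteq> V" "B \<subseteq> V"
  then have "f ((S \<union> A) \<union> (S \<union> B)) + f ((S \<union> A) \<inter> (S \<union> B)) \<le> f (S \<union> A) + f (S \<union> B)"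
    using assms unfolding submodular_on_def by (meson Un_least)
  moreover have "(S \<union> A) \<union> (S \<union> B) = S \<union> (A \<union> B)" "(S \<union> A) \<inter> (S \<union> B) = S \<union> (A \<inter> B)" by auto
  ultimately show "f (S \<union> (A \<union> B)) + f (S \<union> (A \<inter> B)) \<le> f (S \<union> A) + f (S \<union> B)" by simp
qed

lemma submodular_on_union_le:
  assumes sm: "submodular_on V f" and B: "finite B" "B \<subseteq> V" and A: "A \<subseteq> V"
  shows "f (A \<union> B) \<le> f A + (\<Sum>v\<in>B - A. f (A \<union> {v}) - f A)"
  using B
proof (induction B rule: finite_induct)
  case (insert b B)
  then have IH: "f (A \<union> B) \<le> f A + (\<Sum>v\<in>B - A. f (A \<union> {v}) - f A)" by simp
  show ?case
  proof (cases "b \<in> A")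
    case True
    then show ?thesis using IH by (simp add: insert_absorb)
  next
    case False
    have "f (A \<union> B \<union> {b}) - f (A \<union> B) \<le> f (A \<union> {b}) - f A"
      using submodular_on_marginal_antimono[OF sm, of A "A \<union> B" b] A insert False by auto
    moreover have "insert b B - A = insert b (B - A)" using False by auto
    ultimately show ?thesis using IH insert.hyps by simp
  qed
qed simp

lemma submodular_on_remove_le:
  assumes "submodular_on V h" and "A \<subseteq> U" and "U \<subseteq> V" and "u \<in> A"
  shows "h (A - {u}) + (h U - h (U - {u})) \<le> h A"
proof -
  have "A \<subseteq> V" "U - {u} \<subseteq> V" using assms(2,3) by auto
  then have "h (A \<union> (U - {u})) + h (A \<inter> (U - {u})) \<le> h A + h (U - {u})"
    using assms(1) unfolding submodular_on_def by blast
  moreover have "A \<union> (U - {u}) = U" "A \<inter> (U - {u}) = A - {u}" using assms(2,4) by auto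
  ultimately show ?thesis by simp
qed

text \<open>The sampling lemma of Feige, Mirrokni and Vondrak. The lower bound mu on the probability
  of each element is what makes the induction on U go through.\<close>

lemma submodular_random_subset_bound:
  fixes \<pi> :: "'a \<Rightarrow> real" and h :: "nat set \<Rightarrow> real" and A :: "'a \<Rightarrow> nat set"
  assumes \<pi>: "\<forall>\<omega>\<in>\<Omega>. 0 \<le> \<pi> \<omega>" "sum \<pi> \<Omega> = 1"
    and h_nonneg: "\<forall>X \<subseteq> V. 0 \<le> h X" and h_submod: "submodular_on V h"
    and U: "finite U" "U \<subseteq> V" and A: "\<forall>\<omega>\<in>\<Omega>. A \<omega> \<subseteq> U"
    and prob: "\<forall>i\<in>U. \<mu> \<le> (\<Sum>\<omega>\<in>\<Omega>. \<pi> \<omega> * of_bool (i \<in> A \<omega>))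
                  \<and> (\<Sum>\<omega>\<in>\<Omega>. \<pi> \<omega> * of_bool (i \<in> A \<omega>)) \<le> M"
    and \<mu>: "0 \<le> \<mu>" "\<mu> \<le> M"
  shows "(1 - M) * h {} + \<mu> * h U \<le> (\<Sum>\<omega>\<in>\<Omega>. \<pi> \<omega> * h (A \<omega>))"
  using U A prob \<mu>
proof (induction "card U" arbitrary: U A \<mu> rule: less_induct)
  case less
  define q where "q A i = (\<Sum>\<omega>\<in>\<Omega>. \<pi> \<omega> * of_bool (i \<in> A \<omega>))" for A :: "'a \<Rightarrow> nat set" and i
  show ?case
  proof (cases "U = {}")
    case True
    then have "(\<Sum>\<omega>\<in>\<Omega>. \<pi> \<omega> * h (A \<omega>)) = h {}"
      using less.prems(3) \<pi>(2) by (simp add: sum_distrib_right[symmetric])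
    moreover have "0 \<le> h {}" using h_nonneg by simp
    ultimately show ?thesis using True less.prems(5,6) by (simp add: algebra_simps mult_right_mono)
  next
    case False
    obtain u where u: "u \<in> U" "\<forall>i\<in>U. q A u \<le> q A i"
      using ex_min_if_finite[OF less.prems(1) False]
      by (metis (no_types, lifting) False arg_min_if_finite(1) arg_min_least less.prems(1))
    define U' where "U' = U - {u}"
    define A' where "A' \<omega> = A \<omega> - {u}" for \<omega>
    have IH: "(1 - M) * h {} + q A u * h U' \<le> (\<Sum>\<omega>\<in>\<Omega>. \<pi> \<omega> * h (A' \<omega>))"
    proof (rule less.hyps)
      show "card U' < card U" unfolding U'_def using less.prems(1) u(1) by (rule card_Diff1_less)
      show "\<forall>i\<in>U'. q A u \<le> (\<Sum>\<omega>\<in>\<Omega>. \<pi> \<omega> * of_bool (i \<in> A' \<omega>))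
          \<and> (\<Sum>\<omega>\<in>\<Omega>. \<pi> \<omega> * of_bool (i \<in> A' \<omega>)) \<le> M"
      proof
        fix i assume i: "i \<in> U'"
        then have iU: "i \<in> U" and "i \<noteq> u" by (simp_all add: U'_def)
        then have "(\<Sum>\<omega>\<in>\<Omega>. \<pi> \<omega> * of_bool (i \<in> A' \<omega>)) = q A i" by (simp add: A'_def q_def)
        moreover have "q A u \<le> q A i" using u(2) iU by blast
        moreover have "q A i \<le> M" using less.prems(4) iU unfolding q_def by blast
        ultimately show "q A u \<le> (\<Sum>\<omega>\<in>\<Omega>. \<pi> \<omega> * of_bool (i \<in> A' \<omega>))
          \<and> (\<Sum>\<omega>\<in>\<Omega>. \<pi> \<omega> * of_bool (i \<in> A' \<omega>)) \<le> M" by simp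
      qed
      show "0 \<le> q A u" using \<pi>(1) by (auto simp: q_def intro: sum_nonneg)
      show "q A u \<le> M" using less.prems(4) u(1) by (simp add: q_def)
      show "finite U'" "U' \<subseteq> V" using less.prems(1,2) by (auto simp: U'_def)
      show "\<forall>\<omega>\<in>\<Omega>. A' \<omega> \<subseteq> U'" using less.prems(3) by (auto simp: U'_def A'_def)
    qed
    have step: "h (A' \<omega>) + of_bool (u \<in> A \<omega>) * (h U - h U') \<le> h (A \<omega>)" if "\<omega> \<in> \<Omega>" for \<omega>
    proof (cases "u \<in> A \<omega>")
      case True
      have "A \<omega> \<subseteq> U" using less.prems(3) that by blast
      then show ?thesis
        using submodular_on_remove_le[OF h_submod _ less.prems(2) True] True
        by (simp add: A'_def U'_def)
    qed (simp add: A'_def)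
    have "(\<Sum>\<omega>\<in>\<Omega>. \<pi> \<omega> * h (A' \<omega>)) + q A u * (h U - h U')
        = (\<Sum>\<omega>\<in>\<Omega>. \<pi> \<omega> * h (A' \<omega>) + \<pi> \<omega> * of_bool (u \<in> A \<omega>) * (h U - h U'))"
      by (simp add: q_def sum.distrib sum_distrib_right)
    also have "\<dots> = (\<Sum>\<omega>\<in>\<Omega>. \<pi> \<omega> * (h (A' \<omega>) + of_bool (u \<in> A \<omega>) * (h U - h U')))"
      by (simp add: algebra_simps)
    also have "\<dots> \<le> (\<Sum>\<omega>\<in>\<Omega>. \<pi> \<omega> * h (A \<omega>))"
      using step \<pi>(1) by (intro sum_mono mult_left_mono) auto
    finally have "(1 - M) * h {} + q A u * h U \<le> (\<Sum>\<omega>\<in>\<Omega>. \<pi> \<omega> * h (A \<omega>))"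
      using IH by (simp add: algebra_simps)
    moreover have "\<mu> * h U \<le> q A u * h U"
      using less.prems(2,4) u(1) h_nonneg by (intro mult_right_mono) (auto simp: q_def)
    ultimately show ?thesis by simp
  qed
qed

section \<open>Independent coins\<close>

definition coin_space :: "nat \<Rightarrow> (nat \<Rightarrow> bool) set" where
  "coin_space m = {Z. \<forall>x. x \<notin> {1..m} \<longrightarrow> Z x = False}"

abbreviation coins :: "nat \<Rightarrow> real \<Rightarrow> (nat \<Rightarrow> bool) pmf" where
  "coins m p \<equiv> Pi_pmf {1..m} False (\<lambda>_. bernoulli_pmf p)"

lemma finite_coin_space: "finite (coin_space m)"
proof -
  have "coin_space m = PiE_dflt {1..m} False (\<lambda>_. UNIV)"
    by (auto simp: coin_space_def PiE_dflt_def)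
  then show ?thesis by auto
qed

lemma set_pmf_coins: "set_pmf (coins m p) \<subseteq> coin_space m"
  unfolding coin_space_def by (rule set_Pi_pmf_subset) simp

lemma expectation_coins:
  "measure_pmf.expectation (coins m p) h = (\<Sum>Z\<in>coin_space m. pmf (coins m p) Z * h Z)"
  using integral_measure_pmf[OF finite_coin_space, of "coins m p" h] set_pmf_coins by auto

lemma sum_pmf_coins: "(\<Sum>Z\<in>coin_space m. pmf (coins m p) Z) = 1"
  by (rule sum_pmf_eq_1[OF finite_coin_space set_pmf_coins])

lemma pmf_coins:
  "Z \<in> coin_space m \<Longrightarrow> pmf (coins m p) Z = (\<Prod>x\<in>{1..m}. pmf (bernoulli_pmf p) (Z x))"
  unfolding coin_space_def by (subst pmf_Pi) auto

lemma coins_flip: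
  assumes p: "0 \<le> p" "p \<le> 1" and v: "v \<in> {1..m}" and h: "\<And>Z b. h (Z(v := b)) = h Z"
  shows "p * (\<Sum>Z\<in>coin_space m. pmf (coins m p) Z * of_bool (\<not> Z v) * h Z)
       = (1 - p) * (\<Sum>Z\<in>coin_space m. pmf (coins m p) Z * of_bool (Z v) * h Z)"
proof -
  define \<pi> where "\<pi> = pmf (coins m p)"
  define O0 where "O0 = {Z\<in>coin_space m. \<not> Z v}"
  define O1 where "O1 = {Z\<in>coin_space m. Z v}"
  have sums: "(\<Sum>Z\<in>coin_space m. \<pi> Z * of_bool (\<not> Z v) * h Z) = (\<Sum>Z\<in>O0. \<pi> Z * h Z)"
    "(\<Sum>Z\<in>coin_space m. \<pi> Z * of_bool (Z v) * h Z) = (\<Sum>Z\<in>O1. \<pi> Z * h Z)"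
    unfolding O0_def O1_def sum.inter_filter[OF finite_coin_space] by (auto intro!: sum.cong)
  have bij: "bij_betw (\<lambda>Z. Z(v := True)) O0 O1"
    by (rule bij_betw_byWitness[where f' = "\<lambda>Z. Z(v := False)"])
      (use v in \<open>auto simp: O0_def O1_def coin_space_def fun_eq_iff\<close>)
  have \<pi>_flip: "(1 - p) * \<pi> (Z(v := True)) = p * \<pi> Z" if "Z \<in> O0" for Z
  proof -
    have Z: "Z \<in> coin_space m" "\<not> Z v" "Z(v := True) \<in> coin_space m"
      using that v by (auto simp: O0_def coin_space_def)
    define R where "R = (\<Prod>x\<in>{1..m} - {v}. pmf (bernoulli_pmf p) (Z x))"
    have "\<pi> Z = pmf (bernoulli_pmf p) (Z v) * R"
      unfolding \<pi>_def pmf_coins[OF Z(1)] R_def using v by (simp add: prod.remove)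
    moreover have "\<pi> (Z(v := True)) = pmf (bernoulli_pmf p) True * R"
      unfolding \<pi>_def pmf_coins[OF Z(3)] R_def using v by (simp add: prod.remove)
    ultimately show ?thesis using Z(2) p by simp
  qed
  have "(1 - p) * (\<Sum>Z\<in>O1. \<pi> Z * h Z) = (\<Sum>Z\<in>O0. (1 - p) * \<pi> (Z(v := True)) * h Z)"
    by (simp add: sum.reindex_bij_betw[OF bij, symmetric] sum_distrib_left h mult.assoc)
  also have "\<dots> = p * (\<Sum>Z\<in>O0. \<pi> Z * h Z)"
    by (simp add: \<pi>_flip sum_distrib_left mult.assoc cong: sum.cong)
  finally show ?thesis using sums by (simp add: \<pi>_def)
qed

lemma prob_coin:
  assumes "0 \<le> p" "p \<le> 1" and "v \<in> {1..m}"
  shows "(\<Sum>Z\<in>coin_space m. pmf (coins m p) Z * of_bool (Z v)) = p"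
proof -
  define A where "A = (\<Sum>Z\<in>coin_space m. pmf (coins m p) Z * of_bool (Z v))"
  define B where "B = (\<Sum>Z\<in>coin_space m. pmf (coins m p) Z * of_bool (\<not> Z v))"
  have flip: "p * B = (1 - p) * A"
    using coins_flip[OF assms, of "\<lambda>_. 1"] by (simp add: A_def B_def)
  have "A + B = (\<Sum>Z\<in>coin_space m. pmf (coins m p) Z)"
    unfolding A_def B_def sum.distrib[symmetric] by (intro sum.cong) auto
  then have B: "B = 1 - A" using sum_pmf_coins[of m p] by simp
  have "p * (1 - A) = (1 - p) * A" using flip unfolding B .
  then have "A = p" by (simp add: algebra_simps)
  then show ?thesis by (simp add: A_def)
qed

section \<open>Runs of the algorithm\<close>

locale streaming_run =
  fixes f :: "nat set \<Rightarrow> real" and P :: "nat \<Rightarrow> nat set" and k :: nat and n :: "nat \<Rightarrow> nat"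
    and d :: "nat \<Rightarrow> real" and tb :: "nat set \<Rightarrow> (nat \<Rightarrow> real) \<Rightarrow> nat \<Rightarrow> nat" and m :: nat
  assumes submod: "submodular_on {1..m} f"
    and part_disj: "\<forall>a\<in>{1..k}. \<forall>b\<in>{1..k}. a \<noteq> b \<longrightarrow> P a \<inter> P b = {}"
    and part_cover: "(\<Union>a\<in>{1..k}. P a) = {1..m}"
    and budgets: "\<forall>a\<in>{1..k}. n a \<ge> 1"
    and d_pos: "\<forall>a\<in>{1..k}. d a > 0"
    and tiebreak: "\<forall>S w t a. a \<in> {1..k} \<longrightarrow> t \<in> P a \<longrightarrow> S \<inter> P a \<noteq> {} \<longrightarrow>
                     tb S w t \<in> S \<inter> P a \<and> (\<forall>x\<in>S \<inter> P a. w (tb S w t) \<le> w x)"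
begin

definition blk :: "nat \<Rightarrow> nat" where
  "blk t = block_of P k t"

lemma blk_eq:
  assumes "a \<in> {1..k}" "t \<in> P a"
  shows "blk t = a"
  unfolding blk_def block_of_def
proof (rule the_equality)
  show "a \<in> {1..k} \<and> t \<in> P a" using assms by simp
  show "b = a" if "b \<in> {1..k} \<and> t \<in> P b" for b
    using that assms part_disj by blast
qed

lemma blk_in:
  assumes "t \<in> {1..m}"
  shows "blk t \<in> {1..k}" and "t \<in> P (blk t)"
proof -
  obtain a where "a \<in> {1..k}" "t \<in> P a" using assms part_cover by blast
  then show "blk t \<in> {1..k}" "t \<in> P (blk t)" using blk_eq by auto
qed

definition state :: "(nat \<Rightarrow> bool) \<Rightarrow> nat \<Rightarrow> nat set \<times> (nat \<Rightarrow> real) \<times> (nat \<Rightarrow> real)" where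
  "state Z t = fold (alg_step f P k n d tb Z) [1..<t+1] ({}, (\<lambda>_. 0), (\<lambda>_. 0))"

definition sol :: "(nat \<Rightarrow> bool) \<Rightarrow> nat \<Rightarrow> nat set" where
  "sol Z t = fst (state Z t)"

definition wts :: "(nat \<Rightarrow> bool) \<Rightarrow> nat \<Rightarrow> nat \<Rightarrow> real" where
  "wts Z t = fst (snd (state Z t))"

definition thr :: "(nat \<Rightarrow> bool) \<Rightarrow> nat \<Rightarrow> nat \<Rightarrow> real" where
  "thr Z t = snd (snd (state Z t))"

definition gain :: "(nat \<Rightarrow> bool) \<Rightarrow> nat \<Rightarrow> real" where
  "gain Z t = f (sol Z (t - 1) \<union> {t}) - f (sol Z (t - 1))"

definition thr_seen :: "(nat \<Rightarrow> bool) \<Rightarrow> nat \<Rightarrow> real" where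
  "thr_seen Z t = thr Z (t - 1) (blk t)"

definition accepts :: "(nat \<Rightarrow> bool) \<Rightarrow> nat \<Rightarrow> bool" where
  "accepts Z t \<longleftrightarrow> thr_seen Z t \<le> gain Z t \<and> Z t"

definition accepted :: "(nat \<Rightarrow> bool) \<Rightarrow> nat \<Rightarrow> nat set" where
  "accepted Z t = {s\<in>{1..t}. accepts Z s}"

lemma state_0: "state Z 0 = ({}, (\<lambda>_. 0), (\<lambda>_. 0))"
  by (simp add: state_def)

lemma state_Suc: "state Z (Suc t) = alg_step f P k n d tb Z (Suc t) (state Z t)"
  by (simp add: state_def)

lemma alg_output_eq_sol: "alg_output f P k n d tb m Z = sol Z m"
  by (simp add: alg_output_def sol_def state_def)

lemma state_local: "\<forall>x\<in>{1..t}. Z x = Z' x \<Longrightarrow> state Z t = state Z' t"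
proof (induction t)
  case 0
  then show ?case by (simp add: state_0)
next
  case (Suc t)
  then have "state Z t = state Z' t" "Z (Suc t) = Z' (Suc t)" by auto
  then show ?case by (simp add: state_Suc alg_step_def)
qed

lemma gain_thr_seen_local:
  "gain (Z(v := b)) v = gain Z v" "thr_seen (Z(v := b)) v = thr_seen Z v"
proof -
  have "state (Z(v := b)) (v - 1) = state Z (v - 1)" by (rule state_local) auto
  then show "gain (Z(v := b)) v = gain Z v" "thr_seen (Z(v := b)) v = thr_seen Z v"
    by (simp_all add: gain_def thr_seen_def sol_def thr_def)
qed

lemma state_Suc_cases:
  obtains S w \<beta> where "state Z t = (S, w, \<beta>)" and "sol Z t = S" and "wts Z t = w"
    and "thr Z t = \<beta>"
    and "gain Z (Suc t) = f (S \<union> {Suc t}) - f S" and "thr_seen Z (Suc t) = \<beta> (blk (Suc t))"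
  by (cases "state Z t") (auto simp: sol_def wts_def thr_def gain_def thr_seen_def)

lemma sol_Suc: "sol Z (Suc t) =
  (if accepts Z (Suc t) then
     (if card (sol Z t \<inter> P (blk (Suc t))) < n (blk (Suc t)) then insert (Suc t) (sol Z t)
      else insert (Suc t) (sol Z t - {tb (sol Z t) (wts Z t) (Suc t)}))
   else sol Z t)"
proof -
  obtain S w \<beta> where "state Z t = (S, w, \<beta>)" "sol Z t = S" "wts Z t = w"
    "gain Z (Suc t) = f (S \<union> {Suc t}) - f S" "thr_seen Z (Suc t) = \<beta> (blk (Suc t))"
    by (rule state_Suc_cases)
  then show ?thesis by (simp add: sol_def state_Suc alg_step_def Let_def accepts_def blk_def)
qed

lemma wts_Suc:
  "wts Z (Suc t) = (if accepts Z (Suc t) then (wts Z t)(Suc t := gain Z (Suc t)) else wts Z t)"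
proof -
  obtain S w \<beta> where "state Z t = (S, w, \<beta>)" "wts Z t = w"
    "gain Z (Suc t) = f (S \<union> {Suc t}) - f S" "thr_seen Z (Suc t) = \<beta> (blk (Suc t))"
    by (rule state_Suc_cases)
  then show ?thesis by (simp add: wts_def state_Suc alg_step_def Let_def accepts_def blk_def)
qed

lemma thr_Suc: "thr Z (Suc t) =
  (if accepts Z (Suc t) then (thr Z t)(blk (Suc t) :=
     threshold (d (blk (Suc t))) (n (blk (Suc t))) (wts Z (Suc t)) (sol Z (Suc t) \<inter> P (blk (Suc t))))
   else thr Z t)"
proof -
  obtain S w \<beta> where "state Z t = (S, w, \<beta>)" "thr Z t = \<beta>"
    "gain Z (Suc t) = f (S \<union> {Suc t}) - f S" "thr_seen Z (Suc t) = \<beta> (blk (Suc t))"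
    by (rule state_Suc_cases)
  then show ?thesis
    by (simp add: thr_def wts_def sol_def state_Suc alg_step_def Let_def accepts_def blk_def)
qed

lemma accepted_Suc:
  "accepted Z (Suc t) = (if accepts Z (Suc t) then insert (Suc t) (accepted Z t) else accepted Z t)"
  by (auto simp: accepted_def le_Suc_eq)

lemma accepted_subset: "accepted Z t \<subseteq> {1..t}"
  by (auto simp: accepted_def)

lemma Suc_notin_accepted: "Suc t \<notin> accepted Z t"
  using accepted_subset by fastforce

lemma sol_Suc_subset: "sol Z (Suc t) \<subseteq> insert (Suc t) (sol Z t)"
  by (auto simp: sol_Suc)

lemma sol_subset_accepted: "sol Z t \<subseteq> accepted Z t"
proof (induction t)
  case 0
  then show ?case by (simp add: sol_def state_0)
next
  case (Suc t)
  then show ?case by (auto simp: sol_Suc accepted_Suc)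
qed

lemma sol_subset: "sol Z t \<subseteq> {1..t}"
  using sol_subset_accepted accepted_subset by blast

lemma wts_accepted: "s \<in> accepted Z t \<Longrightarrow> wts Z t s = gain Z s"
proof (induction t)
  case 0
  then show ?case by (simp add: accepted_def)
next
  case (Suc t)
  then show ?case using Suc_notin_accepted by (auto simp: wts_Suc accepted_Suc split: if_splits)
qed

lemma thr_seen_le_gain: "s \<in> accepted Z t \<Longrightarrow> thr_seen Z s \<le> gain Z s"
  by (simp add: accepted_def accepts_def)

lemma f_sol_lower_bound: "t \<le> m \<Longrightarrow> T \<subseteq> sol Z t \<Longrightarrow> f {} + sum (gain Z) T \<le> f T"
proof (induction t arbitrary: T)
  case 0
  then show ?case by (simp add: sol_def state_0)
next
  case (Suc t)
  show ?case
  proof (cases "Suc t \<in> T")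
    case True
    have T_sub: "T - {Suc t} \<subseteq> sol Z t" using Suc.prems sol_Suc_subset by blast
    have "sol Z t \<subseteq> {1..m}" "Suc t \<notin> sol Z t" using sol_subset[of Z t] Suc.prems by auto
    moreover have "T - {Suc t} \<union> {Suc t} = T" using True by auto
    ultimately have "gain Z (Suc t) \<le> f T - f (T - {Suc t})"
      using submodular_on_marginal_antimono[OF submod T_sub, of "Suc t"] Suc.prems
      by (simp add: gain_def)
    moreover have "f {} + sum (gain Z) (T - {Suc t}) \<le> f (T - {Suc t})"
      using Suc T_sub by simp
    moreover have "finite T" using Suc.prems sol_subset finite_subset by (metis finite_atLeastAtMost)
    ultimately show ?thesis using True by (simp add: sum.remove)
  next
    case False
    then have "T \<subseteq> sol Z t" using Suc.prems(2) sol_Suc_subset by blast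
    then show ?thesis using Suc by simp
  qed
qed

lemma f_accepted_upper_bound: "t \<le> m \<Longrightarrow> f (accepted Z t) \<le> f {} + sum (gain Z) (accepted Z t)"
proof (induction t)
  case 0
  then show ?case by (simp add: accepted_def)
next
  case (Suc t)
  show ?case
  proof (cases "accepts Z (Suc t)")
    case True
    have "f (accepted Z t \<union> {Suc t}) - f (accepted Z t) \<le> gain Z (Suc t)"
      using submodular_on_marginal_antimono[OF submod sol_subset_accepted, of Z t "Suc t"]
        accepted_subset[of Z t] Suc.prems Suc_notin_accepted by (force simp: gain_def)
    moreover have "finite (accepted Z t)" by (simp add: accepted_def)
    ultimately show ?thesis using Suc True Suc_notin_accepted[of t Z] by (simp add: accepted_Suc)
  next
    case False
    then show ?thesis using Suc by (simp add: accepted_Suc)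
  qed
qed

lemma sol_Suc_Int_block:
  assumes a: "a \<in> {1..k}" and tm: "Suc t \<le> m"
  shows "sol Z (Suc t) \<inter> P a =
    (if accepts Z (Suc t) \<and> blk (Suc t) = a then
       (if card (sol Z t \<inter> P a) < n a then insert (Suc t) (sol Z t \<inter> P a)
        else insert (Suc t) (sol Z t \<inter> P a - {tb (sol Z t) (wts Z t) (Suc t)}))
     else sol Z t \<inter> P a)"
proof -
  define u where "u = Suc t"
  have u: "blk u \<in> {1..k}" "u \<in> P (blk u)" using blk_in tm by (auto simp: u_def)
  show ?thesis
  proof (cases "accepts Z u \<and> blk u \<noteq> a")
    case True
    then have "u \<notin> P a" using part_disj u a by blast
    moreover have "tb (sol Z t) (wts Z t) u \<notin> P a"
      if full: "\<not> card (sol Z t \<inter> P (blk u)) < n (blk u)"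
    proof -
      have "n (blk u) \<ge> 1" using budgets u by auto
      then have "sol Z t \<inter> P (blk u) \<noteq> {}" using full by auto
      then have "tb (sol Z t) (wts Z t) u \<in> P (blk u)" using tiebreak u by blast
      then show ?thesis using part_disj u a True by blast
    qed
    ultimately show ?thesis using True by (auto simp: sol_Suc u_def)
  qed (use u in \<open>auto simp: sol_Suc u_def\<close>)
qed

text \<open>kept_gain, accepted_gain and surplus are the quantities W_a, X_a and E_a of the potential
  argument.\<close>

definition kept_gain :: "(nat \<Rightarrow> bool) \<Rightarrow> nat \<Rightarrow> nat \<Rightarrow> real" where
  "kept_gain Z t a = sum (gain Z) (sol Z t \<inter> P a)"

definition accepted_gain :: "(nat \<Rightarrow> bool) \<Rightarrow> nat \<Rightarrow> nat \<Rightarrow> real" where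
  "accepted_gain Z t a = sum (gain Z) (accepted Z t \<inter> P a)"

definition surplus :: "(nat \<Rightarrow> bool) \<Rightarrow> nat \<Rightarrow> nat \<Rightarrow> real" where
  "surplus Z t a = (\<Sum>s\<in>accepted Z t \<inter> P a. gain Z s - thr_seen Z s)"

definition block_inv :: "(nat \<Rightarrow> bool) \<Rightarrow> nat \<Rightarrow> nat \<Rightarrow> bool" where
  "block_inv Z t a \<longleftrightarrow>
     card (sol Z t \<inter> P a) \<le> n a \<and>
     thr Z t a = threshold (d a) (n a) (wts Z t) (sol Z t \<inter> P a) \<and> 0 \<le> thr Z t a \<and>
     (\<forall>s\<in>accepted Z t \<inter> P a.
        0 \<le> thr_seen Z s \<and> c_par (d a) (n a) / real (n a) * gain Z s \<le> thr Z t a) \<and>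
     accepted_gain Z t a + real (n a) * thr Z t a + d a * surplus Z t a
       \<le> (1 + c_par (d a) (n a) + d a) * kept_gain Z t a \<and>
     surplus Z t a \<le> kept_gain Z t a"

lemma block_inv_0: "block_inv Z 0 a"
  by (simp add: block_inv_def sol_def thr_def wts_def state_0 accepted_def kept_gain_def
      accepted_gain_def surplus_def threshold_def ith_largest_def)

lemma block_inv_Suc_unchanged:
  assumes inv: "block_inv Z t a" and a: "a \<in> {1..k}" and tm: "Suc t \<le> m"
    and other: "\<not> (accepts Z (Suc t) \<and> blk (Suc t) = a)"
  shows "block_inv Z (Suc t) a" and "thr Z (Suc t) a = thr Z t a"
proof -
  have sol_eq: "sol Z (Suc t) \<inter> P a = sol Z t \<inter> P a"
    unfolding sol_Suc_Int_block[OF a tm] if_not_P[OF other] ..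
  have "Suc t \<notin> P a" if "accepts Z (Suc t)"
    using that other blk_in[of "Suc t"] tm part_disj a by fastforce
  then have acc_eq: "accepted Z (Suc t) \<inter> P a = accepted Z t \<inter> P a"
    by (auto simp: accepted_Suc)
  show thr_eq: "thr Z (Suc t) a = thr Z t a"
    using other by (auto simp: thr_Suc)
  have thr_wts: "threshold (d a) (n a) (wts Z (Suc t)) (sol Z t \<inter> P a)
      = threshold (d a) (n a) (wts Z t) (sol Z t \<inter> P a)"
    using sol_subset[of Z t] by (intro threshold_cong) (auto simp: wts_Suc)
  show "block_inv Z (Suc t) a"
    using inv unfolding block_inv_def kept_gain_def accepted_gain_def surplus_def
      sol_eq acc_eq thr_eq thr_wts .
qed

lemma kept_gain_conv_wts: "kept_gain Z t a = sum (wts Z t) (sol Z t \<inter> P a)"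
  unfolding kept_gain_def using sol_subset_accepted[of Z t]
  by (intro sum.cong) (auto simp: wts_accepted subset_iff)

lemma block_inv_wts_nonneg:
  assumes "block_inv Z t a" and "s \<in> sol Z t \<inter> P a"
  shows "0 \<le> wts Z t s"
proof -
  have s: "s \<in> accepted Z t \<inter> P a" using assms(2) sol_subset_accepted by blast
  then have "0 \<le> thr_seen Z s" using assms(1) unfolding block_inv_def by blast
  also have "\<dots> \<le> gain Z s" using s thr_seen_le_gain by blast
  also have "\<dots> = wts Z t s" using s wts_accepted by simp
  finally show ?thesis .
qed

lemma accept_step:
  assumes inv: "block_inv Z t a" and tm: "Suc t \<le> m"
    and acc: "accepts Z (Suc t)" and a_def: "blk (Suc t) = a"
  defines "x \<equiv> gain Z (Suc t)" and "\<Delta>W \<equiv> kept_gain Z (Suc t) a - kept_gain Z t a"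
  shows "x + d a * (x - thr Z t a)
           \<le> (1 + c_par (d a) (n a) + d a) * \<Delta>W - real (n a) * (thr Z (Suc t) a - thr Z t a)"
    and "x - thr Z t a \<le> \<Delta>W" and "thr Z t a \<le> thr Z (Suc t) a"
    and "c_par (d a) (n a) / real (n a) * x \<le> thr Z (Suc t) a"
    and "card (sol Z (Suc t) \<inter> P a) \<le> n a"
proof -
  define u where "u = Suc t"
  define T where "T = sol Z t \<inter> P a"
  define w where "w = wts Z t"
  define e where "e = tb (sol Z t) w u"
  define T' where "T' = sol Z (Suc t) \<inter> P a"
  have a: "a \<in> {1..k}" "u \<in> P a" using blk_in[of u] tm by (auto simp: u_def a_def)
  have na: "n a \<ge> 1" "d a > 0" using budgets d_pos a by auto
  have I: "card T \<le> n a" "thr Z t a = threshold (d a) (n a) w T"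
    using inv unfolding block_inv_def T_def w_def by blast+
  have T'_eq: "T' = (if card T < n a then insert u T else insert u (T - {e}))"
    using sol_Suc_Int_block[OF a(1) tm] acc a_def by (simp add: T'_def T_def e_def w_def u_def)
  have w_nonneg: "\<forall>s\<in>T. 0 \<le> w s"
    using block_inv_wts_nonneg[OF inv] by (simp add: T_def w_def)
  have evict: "card T = n a \<longrightarrow> e \<in> T \<and> (\<forall>y\<in>T. w e \<le> w y)"
  proof
    assume "card T = n a"
    then have "sol Z t \<inter> P a \<noteq> {}" using na by (auto simp: T_def)
    then show "e \<in> T \<and> (\<forall>y\<in>T. w e \<le> w y)"
      unfolding T_def e_def by (rule tiebreak[rule_format, OF a])
  qed
  have x_ge: "thr Z t a \<le> x"
    using acc by (simp add: accepts_def thr_seen_def a_def x_def)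
  have fin: "finite T" using sol_subset[of Z t] by (auto simp: T_def intro: finite_subset)
  have u_T: "u \<notin> T" using sol_subset[of Z t] by (auto simp: T_def u_def)
  have thr': "thr Z (Suc t) a = threshold (d a) (n a) (w(u := x)) T'"
    using acc a_def by (simp add: thr_Suc wts_Suc T'_def w_def x_def u_def)
  have kept: "kept_gain Z t a = sum w T"
    by (simp add: kept_gain_conv_wts T_def w_def)
  have kept': "kept_gain Z (Suc t) a = sum (w(u := x)) T'"
    using acc by (simp add: kept_gain_conv_wts wts_Suc T'_def w_def x_def u_def)
  note ex = block_exchange[OF na fin I(1) w_nonneg u_T evict T'_eq, of x,
      folded I(2) thr' kept kept', OF x_ge]
  show "x + d a * (x - thr Z t a)
      \<le> (1 + c_par (d a) (n a) + d a) * \<Delta>W - real (n a) * (thr Z (Suc t) a - thr Z t a)"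
    using ex(1) by (simp add: \<Delta>W_def)
  show "x - thr Z t a \<le> \<Delta>W" using ex(2) by (simp add: \<Delta>W_def)
  show "thr Z t a \<le> thr Z (Suc t) a" by (rule ex(3))
  show "c_par (d a) (n a) / real (n a) * x \<le> thr Z (Suc t) a" by (rule ex(4))
  show "card (sol Z (Suc t) \<inter> P a) \<le> n a" using ex(5) by (simp add: T'_def)
qed

lemma block_inv_Suc_accept:
  assumes inv: "block_inv Z t a" and tm: "Suc t \<le> m"
    and acc: "accepts Z (Suc t)" and a_def: "blk (Suc t) = a"
  shows "block_inv Z (Suc t) a"
proof -
  define u where "u = Suc t"
  define x where "x = gain Z (Suc t)"
  note step = accept_step[OF inv tm acc a_def, folded x_def]
  have a: "u \<in> P a" using blk_in[of u] tm by (auto simp: u_def a_def)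
  have I: "0 \<le> thr Z t a"
    "\<forall>s\<in>accepted Z t \<inter> P a. 0 \<le> thr_seen Z s \<and> c_par (d a) (n a) / real (n a) * gain Z s \<le> thr Z t a"
    "accepted_gain Z t a + real (n a) * thr Z t a + d a * surplus Z t a
       \<le> (1 + c_par (d a) (n a) + d a) * kept_gain Z t a"
    "surplus Z t a \<le> kept_gain Z t a"
    using inv unfolding block_inv_def by blast+
  have acc_Suc: "accepted Z (Suc t) \<inter> P a = insert u (accepted Z t \<inter> P a)"
    using acc a by (auto simp: accepted_Suc u_def)
  have u_notin: "u \<notin> accepted Z t \<inter> P a" using Suc_notin_accepted by (simp add: u_def)
  have fin_acc: "finite (accepted Z t \<inter> P a)" by (simp add: accepted_def)
  have thr_seen_u: "thr_seen Z u = thr Z t a" by (simp add: thr_seen_def u_def a_def)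
  have gains: "accepted_gain Z (Suc t) a = accepted_gain Z t a + x"
    "surplus Z (Suc t) a = surplus Z t a + (x - thr Z t a)"
    using fin_acc u_notin thr_seen_u
    by (simp_all add: accepted_gain_def surplus_def acc_Suc x_def u_def)
  have new: "0 \<le> thr_seen Z s \<and> c_par (d a) (n a) / real (n a) * gain Z s \<le> thr Z (Suc t) a"
    if "s \<in> accepted Z (Suc t) \<inter> P a" for s
  proof -
    have "s = u \<or> s \<in> accepted Z t \<inter> P a" using that unfolding acc_Suc by simp
    then consider "s = u" | "s \<in> accepted Z t \<inter> P a" by blast
    then show ?thesis
    proof cases
      case 1
      then show ?thesis using step(4) I(1) thr_seen_u by (simp add: x_def u_def)
    next
      case 2
      then have "0 \<le> thr_seen Z s" "c_par (d a) (n a) / real (n a) * gain Z s \<le> thr Z t a"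
        using I(2) by blast+
      then show ?thesis using step(3) by linarith
    qed
  qed
  have "thr Z (Suc t) a = threshold (d a) (n a) (wts Z (Suc t)) (sol Z (Suc t) \<inter> P a)"
    using acc a_def by (simp add: thr_Suc)
  moreover have "accepted_gain Z (Suc t) a + real (n a) * thr Z (Suc t) a + d a * surplus Z (Suc t) a
      \<le> (1 + c_par (d a) (n a) + d a) * kept_gain Z (Suc t) a"
    using I(3) step(1) unfolding gains by (simp add: algebra_simps)
  moreover have "surplus Z (Suc t) a \<le> kept_gain Z (Suc t) a"
    using I(4) step(2) unfolding gains by simp
  moreover have "0 \<le> thr Z (Suc t) a" using I(1) step(3) by simp
  ultimately show "block_inv Z (Suc t) a"
    using step(5) new unfolding block_inv_def by blast
qed

lemma block_inv_Suc:
  assumes "block_inv Z t a" and "a \<in> {1..k}" and "Suc t \<le> m"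
  shows "block_inv Z (Suc t) a" and "thr Z t a \<le> thr Z (Suc t) a"
  using block_inv_Suc_unchanged[OF assms] block_inv_Suc_accept[OF assms(1,3)]
    accept_step(3)[OF assms(1,3)]
  by (cases "accepts Z (Suc t) \<and> blk (Suc t) = a"; simp)+

lemma block_inv: "a \<in> {1..k} \<Longrightarrow> t \<le> m \<Longrightarrow> block_inv Z t a"
  by (induction t) (simp_all add: block_inv_0 block_inv_Suc)

lemma thr_mono:
  assumes "a \<in> {1..k}" and "s \<le> t" and "t \<le> m"
  shows "thr Z s a \<le> thr Z t a"
  using assms(2,3)
proof (induction t rule: dec_induct)
  case (step t)
  then have "thr Z s a \<le> thr Z t a" by simp
  also have "\<dots> \<le> thr Z (Suc t) a"
    using block_inv_Suc(2)[OF block_inv[OF assms(1)] assms(1)] step.prems by simp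
  finally show ?case .
qed simp

lemma thr_seen_le_final:
  assumes "a \<in> {1..k}" and "v \<in> P a" and "v \<in> {1..m}"
  shows "thr_seen Z v \<le> thr Z m a"
  unfolding thr_seen_def blk_eq[OF assms(1,2)] using assms by (intro thr_mono) auto

lemma surplus_nonneg: "0 \<le> surplus Z t a"
  unfolding surplus_def using thr_seen_le_gain by (intro sum_nonneg) (auto simp: accepted_def)

lemma scaled_excess_bound:
  fixes p :: real
  assumes a: "a \<in> {1..k}" and H: "H \<subseteq> accepted Z m \<inter> P a"
  defines "\<alpha> \<equiv> 1 / p - 1 - c_par (d a) (n a) / real (n a)"
  shows "(1 / p - 1) * (\<Sum>v\<in>H. gain Z v - thr_seen Z v)
           \<le> max \<alpha> 0 * surplus Z m a + real (card H) * thr Z m a"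
proof -
  define c where "c = c_par (d a) (n a)"
  have c_pos: "c > 0" using c_par_pos budgets d_pos a by (simp add: c_def)
  have \<beta>: "\<forall>s\<in>accepted Z m \<inter> P a. 0 \<le> thr_seen Z s \<and> c / real (n a) * gain Z s \<le> thr Z m a"
    using block_inv[OF a, of m Z] unfolding block_inv_def c_def by blast
  have excess: "(1 / p - 1) * (gain Z v - thr_seen Z v) \<le> max \<alpha> 0 * (gain Z v - thr_seen Z v) + thr Z m a"
    if v: "v \<in> H" for v
  proof -
    have "0 \<le> thr_seen Z v" "thr_seen Z v \<le> gain Z v" "c / real (n a) * gain Z v \<le> thr Z m a"
      using \<beta> thr_seen_le_gain v H by auto
    moreover from this have "c / real (n a) * (gain Z v - thr_seen Z v) \<le> c / real (n a) * gain Z v"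
      using c_pos by (intro mult_left_mono) auto
    moreover have "\<alpha> * (gain Z v - thr_seen Z v) \<le> max \<alpha> 0 * (gain Z v - thr_seen Z v)"
      using calculation by (intro mult_right_mono) auto
    ultimately show ?thesis by (simp add: \<alpha>_def c_def algebra_simps)
  qed
  have "(1 / p - 1) * (\<Sum>v\<in>H. gain Z v - thr_seen Z v)
      \<le> max \<alpha> 0 * (\<Sum>v\<in>H. gain Z v - thr_seen Z v) + real (card H) * thr Z m a"
    using sum_mono[of H, OF excess] by (simp add: sum_distrib_left sum.distrib)
  moreover have "(\<Sum>v\<in>H. gain Z v - thr_seen Z v) \<le> surplus Z m a"
    unfolding surplus_def using H thr_seen_le_gain
    by (intro sum_mono2) (auto simp: accepted_def)
  then have "max \<alpha> 0 * (\<Sum>v\<in>H. gain Z v - thr_seen Z v) \<le> max \<alpha> 0 * surplus Z m a"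
    by (intro mult_left_mono) auto
  ultimately show ?thesis by linarith
qed

lemma block_final_bound:
  assumes p: "0 < p" and a: "a \<in> {1..k}" and S: "S \<subseteq> {1..m}" "card (S \<inter> P a) \<le> n a"
  shows "accepted_gain Z m a + (\<Sum>v\<in>S \<inter> P a - accepted Z m. thr_seen Z v)
           + (1 / p - 1) * (\<Sum>v\<in>S \<inter> P a \<inter> accepted Z m. gain Z v - thr_seen Z v)
         \<le> Q_par p (d a) (n a) * kept_gain Z m a"
proof -
  define \<beta> where "\<beta> = thr Z m a"
  define M where "M = S \<inter> P a - accepted Z m"
  define H where "H = S \<inter> P a \<inter> accepted Z m"
  have inv: "block_inv Z m a" using block_inv[OF a] by simp
  have M: "sum (thr_seen Z) M \<le> real (card M) * \<beta>"
  proof (rule sum_bounded_above)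
    fix v assume "v \<in> M"
    then show "thr_seen Z v \<le> \<beta>"
      using thr_seen_le_final[OF a] S(1) by (auto simp: M_def \<beta>_def)
  qed
  have "card M + card H = card (S \<inter> P a)"
    using S(1) finite_subset[OF S(1)]
    by (subst card_Un_disjoint[symmetric]) (auto simp: M_def H_def intro: arg_cong[where f = card])
  moreover have "0 \<le> \<beta>" using inv unfolding block_inv_def \<beta>_def by blast
  ultimately have card_MH: "real (card M) * \<beta> + real (card H) * \<beta> \<le> real (n a) * \<beta>"
    using S(2) by (simp add: mult_right_mono flip: distrib_right)
  have "accepted_gain Z m a + real (n a) * \<beta> + d a * surplus Z m a
      \<le> (1 + c_par (d a) (n a) + d a) * kept_gain Z m a" "surplus Z m a \<le> kept_gain Z m a"
    using inv unfolding block_inv_def \<beta>_def by blast+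
  moreover have "0 \<le> d a" using d_pos a by (simp add: less_imp_le)
  ultimately have "accepted_gain Z m a + real (n a) * \<beta>
      + max (1 / p - 1 - c_par (d a) (n a) / real (n a)) 0 * surplus Z m a
      \<le> Q_par p (d a) (n a) * kept_gain Z m a"
    using surplus_nonneg by (intro potential_le_Q_par) auto
  moreover have "(1 / p - 1) * (\<Sum>v\<in>H. gain Z v - thr_seen Z v)
      \<le> max (1 / p - 1 - c_par (d a) (n a) / real (n a)) 0 * surplus Z m a + real (card H) * \<beta>"
    unfolding \<beta>_def by (rule scaled_excess_bound[OF a]) (auto simp: H_def)
  ultimately show ?thesis using M card_MH unfolding M_def H_def by linarith
qed

lemma sum_over_blocks:
  assumes "X \<subseteq> {1..m}"
  shows "sum h X = (\<Sum>a\<in>{1..k}. sum h (X \<inter> P a))"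
proof -
  have "X = (\<Union>a\<in>{1..k}. X \<inter> P a)" using assms part_cover by blast
  then have "sum h X = sum h (\<Union>a\<in>{1..k}. X \<inter> P a)" by simp
  also have "\<dots> = (\<Sum>a\<in>{1..k}. sum h (X \<inter> P a))"
    using assms part_disj by (intro sum.UNION_disjoint) (auto intro: finite_subset)
  finally show ?thesis .
qed

lemma kept_gain_nonneg:
  assumes "a \<in> {1..k}"
  shows "0 \<le> kept_gain Z m a"
  unfolding kept_gain_def
proof (rule sum_nonneg)
  fix s assume "s \<in> sol Z m \<inter> P a"
  then have s: "s \<in> accepted Z m \<inter> P a" using sol_subset_accepted by blast
  then have "0 \<le> thr_seen Z s" using block_inv[OF assms, of m Z] unfolding block_inv_def by blast
  also have "\<dots> \<le> gain Z s" using thr_seen_le_gain s by blast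
  finally show "0 \<le> gain Z s" .
qed

lemma run_bound:
  assumes p: "0 < p" and S: "S \<subseteq> {1..m}" "\<forall>a\<in>{1..k}. card (S \<inter> P a) \<le> n a"
  shows "sum (gain Z) (accepted Z m) + (\<Sum>v\<in>S - accepted Z m. thr_seen Z v)
           + (1 / p - 1) * (\<Sum>v\<in>S \<inter> accepted Z m. gain Z v - thr_seen Z v)
         \<le> (MAX a\<in>{1..k}. Q_par p (d a) (n a)) * sum (gain Z) (sol Z m)"
proof -
  define Q where "Q = (MAX a\<in>{1..k}. Q_par p (d a) (n a))"
  have blocks: "sum (gain Z) (accepted Z m) = (\<Sum>a\<in>{1..k}. accepted_gain Z m a)"
    "(\<Sum>v\<in>S - accepted Z m. thr_seen Z v) = (\<Sum>a\<in>{1..k}. \<Sum>v\<in>S \<inter> P a - accepted Z m. thr_seen Z v)"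
    "(\<Sum>v\<in>S \<inter> accepted Z m. gain Z v - thr_seen Z v)
       = (\<Sum>a\<in>{1..k}. \<Sum>v\<in>S \<inter> P a \<inter> accepted Z m. gain Z v - thr_seen Z v)"
    "sum (gain Z) (sol Z m) = (\<Sum>a\<in>{1..k}. kept_gain Z m a)"
    unfolding accepted_gain_def kept_gain_def
    using S(1) accepted_subset[of Z m] sol_subset[of Z m]
    by (subst sum_over_blocks; auto intro!: sum.cong)+
  have "sum (gain Z) (accepted Z m) + (\<Sum>v\<in>S - accepted Z m. thr_seen Z v)
          + (1 / p - 1) * (\<Sum>v\<in>S \<inter> accepted Z m. gain Z v - thr_seen Z v)
      = (\<Sum>a\<in>{1..k}. accepted_gain Z m a + (\<Sum>v\<in>S \<inter> P a - accepted Z m. thr_seen Z v)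
          + (1 / p - 1) * (\<Sum>v\<in>S \<inter> P a \<inter> accepted Z m. gain Z v - thr_seen Z v))"
    unfolding blocks by (simp add: sum.distrib sum_distrib_left)
  also have "\<dots> \<le> (\<Sum>a\<in>{1..k}. Q_par p (d a) (n a) * kept_gain Z m a)"
    using S by (intro sum_mono block_final_bound[OF p]) auto
  also have "\<dots> \<le> (\<Sum>a\<in>{1..k}. Q * kept_gain Z m a)"
    by (intro sum_mono mult_right_mono) (auto simp: Q_def kept_gain_nonneg)
  also have "\<dots> = Q * sum (gain Z) (sol Z m)"
    unfolding blocks by (simp add: sum_distrib_left)
  finally show ?thesis by (simp add: Q_def)
qed

section \<open>The expected value of the output\<close>

definition coin_loss :: "(nat \<Rightarrow> bool) \<Rightarrow> nat \<Rightarrow> real" where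
  "coin_loss Z v = (if Z v then 0 else max 0 (gain Z v - thr_seen Z v))"

lemma f_union_accepted_le:
  assumes S: "S \<subseteq> {1..m}"
  shows "f (S \<union> accepted Z m) \<le> f {} + sum (gain Z) (accepted Z m)
           + (\<Sum>v\<in>S - accepted Z m. thr_seen Z v) + sum (coin_loss Z) S"
proof -
  define A where "A = accepted Z m"
  have A: "A \<subseteq> {1..m}" using accepted_subset by (simp add: A_def)
  have fin: "finite S" using S finite_subset by blast
  have marginal: "f (A \<union> {v}) - f A \<le> thr_seen Z v + coin_loss Z v" if v: "v \<in> S - A" for v
  proof -
    have vm: "v \<in> {1..m}" using v S by auto
    have "sol Z (v - 1) \<subseteq> A"
      using sol_subset_accepted[of Z "v - 1"] vm by (auto simp: A_def accepted_def)
    then have "f (A \<union> {v}) - f A \<le> gain Z v"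
      using submodular_on_marginal_antimono[OF submod _ A vm] v by (simp add: gain_def)
    moreover have "\<not> accepts Z v" using v vm by (simp add: A_def accepted_def)
    then have "gain Z v \<le> thr_seen Z v + coin_loss Z v" by (auto simp: accepts_def coin_loss_def)
    ultimately show ?thesis by simp
  qed
  have "f (S \<union> A) \<le> f A + (\<Sum>v\<in>S - A. f (A \<union> {v}) - f A)"
    using submodular_on_union_le[OF submod fin S A] by (simp add: Un_commute)
  also have "\<dots> \<le> f A + ((\<Sum>v\<in>S - A. thr_seen Z v) + sum (coin_loss Z) (S - A))"
    unfolding sum.distrib[symmetric] using marginal by (intro add_left_mono sum_mono) auto
  also have "sum (coin_loss Z) (S - A) \<le> sum (coin_loss Z) S"
    using fin by (intro sum_mono2) (auto simp: coin_loss_def)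
  also have "f A \<le> f {} + sum (gain Z) A"
    unfolding A_def by (rule f_accepted_upper_bound) simp
  finally show ?thesis by (simp add: A_def)
qed

lemma expected_coin_loss:
  assumes p: "0 < p" "p \<le> 1" and v: "v \<in> {1..m}"
  shows "(\<Sum>Z\<in>coin_space m. pmf (coins m p) Z * coin_loss Z v)
       = (1 / p - 1) * (\<Sum>Z\<in>coin_space m.
            pmf (coins m p) Z * (of_bool (v \<in> accepted Z m) * (gain Z v - thr_seen Z v)))"
proof -
  define h where "h Z = max 0 (gain Z v - thr_seen Z v)" for Z
  have "p * (\<Sum>Z\<in>coin_space m. pmf (coins m p) Z * of_bool (\<not> Z v) * h Z)
      = (1 - p) * (\<Sum>Z\<in>coin_space m. pmf (coins m p) Z * of_bool (Z v) * h Z)"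
    using p v by (intro coins_flip) (simp_all add: h_def gain_thr_seen_local)
  moreover have "of_bool (\<not> Z v) * h Z = coin_loss Z v" for Z
    by (simp add: coin_loss_def h_def)
  moreover have "of_bool (Z v) * h Z = of_bool (v \<in> accepted Z m) * (gain Z v - thr_seen Z v)" for Z
    using v by (auto simp: h_def accepted_def accepts_def)
  ultimately have "p * (\<Sum>Z\<in>coin_space m. pmf (coins m p) Z * coin_loss Z v)
      = (1 - p) * (\<Sum>Z\<in>coin_space m.
          pmf (coins m p) Z * (of_bool (v \<in> accepted Z m) * (gain Z v - thr_seen Z v)))"
    by (simp add: mult.assoc)
  then show ?thesis using p by (simp add: field_simps)
qed

lemma expected_total_coin_loss:
  assumes p: "0 < p" "p \<le> 1" and S: "S \<subseteq> {1..m}"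
  shows "(\<Sum>Z\<in>coin_space m. pmf (coins m p) Z * sum (coin_loss Z) S)
       = (\<Sum>Z\<in>coin_space m. pmf (coins m p) Z *
            ((1 / p - 1) * (\<Sum>v\<in>S \<inter> accepted Z m. gain Z v - thr_seen Z v)))"
proof -
  have fin: "finite S" using S finite_subset by blast
  have "(\<Sum>Z\<in>coin_space m. pmf (coins m p) Z * sum (coin_loss Z) S)
      = (\<Sum>v\<in>S. \<Sum>Z\<in>coin_space m. pmf (coins m p) Z * coin_loss Z v)"
    by (simp add: sum_distrib_left sum.swap[of _ S])
  also have "\<dots> = (\<Sum>v\<in>S. (1 / p - 1) * (\<Sum>Z\<in>coin_space m.
      pmf (coins m p) Z * (of_bool (v \<in> accepted Z m) * (gain Z v - thr_seen Z v))))"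
    using S by (intro sum.cong refl expected_coin_loss[OF p]) auto
  also have "\<dots> = (\<Sum>Z\<in>coin_space m. pmf (coins m p) Z *
      ((1 / p - 1) * (\<Sum>v\<in>S. of_bool (v \<in> accepted Z m) * (gain Z v - thr_seen Z v))))"
    by (simp add: sum_distrib_left sum.swap[of _ S] algebra_simps)
  also have "\<dots> = (\<Sum>Z\<in>coin_space m. pmf (coins m p) Z *
      ((1 / p - 1) * (\<Sum>v\<in>S \<inter> accepted Z m. gain Z v - thr_seen Z v)))"
    using fin by (simp add: sum.inter_restrict if_distrib cong: if_cong)
  finally show ?thesis .
qed

lemma expected_f_union_accepted_ge:
  assumes p: "0 < p" "p < 1" and f_nonneg: "\<forall>A. A \<subseteq> {1..m} \<longrightarrow> 0 \<le> f A"
    and S: "S \<subseteq> {1..m}"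
  shows "(1 - p) * f S \<le> (\<Sum>Z\<in>coin_space m. pmf (coins m p) Z * f (S \<union> accepted Z m))"
proof -
  have "(1 - p) * f (S \<union> {}) + 0 * f (S \<union> {1..m})
      \<le> (\<Sum>Z\<in>coin_space m. pmf (coins m p) Z * f (S \<union> accepted Z m))"
  proof (rule submodular_random_subset_bound[where V = "{1..m}" and h = "\<lambda>X. f (S \<union> X)"])
    show "submodular_on {1..m} (\<lambda>X. f (S \<union> X))"
      by (rule submodular_on_union_left[OF submod S])
    show "\<forall>i\<in>{1..m}. 0 \<le> (\<Sum>Z\<in>coin_space m. pmf (coins m p) Z * of_bool (i \<in> accepted Z m))
        \<and> (\<Sum>Z\<in>coin_space m. pmf (coins m p) Z * of_bool (i \<in> accepted Z m)) \<le> p"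
    proof
      fix i assume i: "i \<in> {1..m}"
      have "(\<Sum>Z\<in>coin_space m. pmf (coins m p) Z * of_bool (i \<in> accepted Z m))
          \<le> (\<Sum>Z\<in>coin_space m. pmf (coins m p) Z * of_bool (Z i))"
        by (intro sum_mono mult_left_mono) (auto simp: accepted_def accepts_def)
      also have "\<dots> = p" using prob_coin[of p i m] p i by simp
      finally show "0 \<le> (\<Sum>Z\<in>coin_space m. pmf (coins m p) Z * of_bool (i \<in> accepted Z m))
        \<and> (\<Sum>Z\<in>coin_space m. pmf (coins m p) Z * of_bool (i \<in> accepted Z m)) \<le> p"
        by (simp add: sum_nonneg)
    qed
    show "sum (pmf (coins m p)) (coin_space m) = 1" by (rule sum_pmf_coins)
  qed (use f_nonneg S p accepted_subset in auto)
  then show ?thesis by simp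
qed

lemma Q_max_ge_1: "k \<ge> 1 \<Longrightarrow> 1 \<le> (MAX a\<in>{1..k}. Q_par p (d a) (n a))"
  using Q_par_ge_1[of "n 1" "d 1" p] budgets d_pos by (intro order_trans[OF _ Max_ge]) auto

lemma expected_sol_bound:
  assumes p: "0 < p" "p < 1" and k: "k \<ge> 1" and f_nonneg: "\<forall>A. A \<subseteq> {1..m} \<longrightarrow> 0 \<le> f A"
    and S: "S \<subseteq> {1..m}" "\<forall>a\<in>{1..k}. card (S \<inter> P a) \<le> n a"
  shows "(1 - p) * f S \<le> (MAX a\<in>{1..k}. Q_par p (d a) (n a))
           * (\<Sum>Z\<in>coin_space m. pmf (coins m p) Z * f (sol Z m))"
proof -
  define Q where "Q = (MAX a\<in>{1..k}. Q_par p (d a) (n a))"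
  define \<pi> where "\<pi> = pmf (coins m p)"
  define D where "D Z = f {} + sum (gain Z) (accepted Z m) + (\<Sum>v\<in>S - accepted Z m. thr_seen Z v)"
    for Z
  define L where "L Z = (1 / p - 1) * (\<Sum>v\<in>S \<inter> accepted Z m. gain Z v - thr_seen Z v)" for Z
  have Q: "1 \<le> Q" unfolding Q_def using k by (rule Q_max_ge_1)
  have "(1 - p) * f S \<le> (\<Sum>Z\<in>coin_space m. \<pi> Z * f (S \<union> accepted Z m))"
    unfolding \<pi>_def by (rule expected_f_union_accepted_ge[OF p f_nonneg S(1)])
  also have "\<dots> \<le> (\<Sum>Z\<in>coin_space m. \<pi> Z * (D Z + sum (coin_loss Z) S))"
    using f_union_accepted_le[OF S(1)] by (intro sum_mono mult_left_mono) (simp_all add: D_def \<pi>_def)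
  also have "\<dots> = (\<Sum>Z\<in>coin_space m. \<pi> Z * (D Z + L Z))"
    using expected_total_coin_loss[OF p(1) _ S(1)] p
    by (simp add: distrib_left sum.distrib L_def \<pi>_def)
  also have "\<dots> \<le> (\<Sum>Z\<in>coin_space m. \<pi> Z * (Q * f (sol Z m)))"
  proof (intro sum_mono mult_left_mono)
    fix Z
    have "D Z + L Z \<le> f {} + Q * sum (gain Z) (sol Z m)"
      unfolding D_def L_def Q_def using run_bound[OF p(1) S, of Z] by linarith
    also have "\<dots> \<le> f {} + Q * (f (sol Z m) - f {})"
      using f_sol_lower_bound[of m "sol Z m" Z] Q by (simp add: mult_left_mono)
    also have "\<dots> \<le> Q * f (sol Z m)"
      using Q f_nonneg[rule_format, of "{}"] by (simp add: algebra_simps mult_le_cancel_right1)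
    finally show "D Z + L Z \<le> Q * f (sol Z m)" .
  qed (simp add: \<pi>_def)
  finally show ?thesis by (simp add: sum_distrib_left algebra_simps Q_def \<pi>_def)
qed

end

theorem mainTheorem12:
  fixes f :: "nat set \<Rightarrow> real" and m k :: nat and P :: "nat \<Rightarrow> nat set"
    and n :: "nat \<Rightarrow> nat" and d :: "nat \<Rightarrow> real" and p :: real
    and tb :: "nat set \<Rightarrow> (nat \<Rightarrow> real) \<Rightarrow> nat \<Rightarrow> nat" and Sstar :: "nat set"
  assumes nonneg: "\<forall>A. A \<subseteq> {1..m} \<longrightarrow> f A \<ge> 0"
    and submod: "submodular_on {1..m} f"
    and k_pos: "k \<ge> 1"
    and part_nonempty: "\<forall>a\<in>{1..k}. P a \<noteq> {}"
    and part_disj: "\<forall>a\<in>{1..k}. \<forall>b\<in>{1..k}. a \<noteq> b \<longrightarrow> P a \<inter> P b = {}"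
    and part_cover: "(\<Union>a\<in>{1..k}. P a) = {1..m}"
    and budgets: "\<forall>a\<in>{1..k}. n a \<ge> 1"
    and d_pos: "\<forall>a\<in>{1..k}. d a > 0"
    and p: "0 < p" "p < 1"
    and tiebreak: "\<forall>S w t a. a \<in> {1..k} \<longrightarrow> t \<in> P a \<longrightarrow> S \<inter> P a \<noteq> {} \<longrightarrow>
                     tb S w t \<in> S \<inter> P a \<and> (\<forall>x\<in>S \<inter> P a. w (tb S w t) \<le> w x)"
    and Sstar_feas: "Sstar \<subseteq> {1..m}" "\<forall>a\<in>{1..k}. card (Sstar \<inter> P a) \<le> n a"
    and Sstar_opt: "\<forall>S. S \<subseteq> {1..m} \<longrightarrow> (\<forall>a\<in>{1..k}. card (S \<inter> P a) \<le> n a) \<longrightarrow> f S \<le> f Sstar"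
  shows "measure_pmf.expectation (Pi_pmf {1..m} False (\<lambda>_. bernoulli_pmf p))
           (\<lambda>Z. f (alg_output f P k n d tb m Z))
         \<ge> (1 - p) / (MAX a\<in>{1..k}. Q_par p (d a) (n a)) * f Sstar"
proof -
  interpret streaming_run f P k n d tb m
    using submod part_disj part_cover budgets d_pos tiebreak by unfold_locales
  define Q where "Q = (MAX a\<in>{1..k}. Q_par p (d a) (n a))"
  define E where "E = (\<Sum>Z\<in>coin_space m. pmf (coins m p) Z * f (sol Z m))"
  have "measure_pmf.expectation (coins m p) (\<lambda>Z. f (alg_output f P k n d tb m Z)) = E"
    unfolding alg_output_eq_sol E_def by (rule expectation_coins)
  moreover have "(1 - p) * f Sstar \<le> Q * E"
    unfolding Q_def E_def by (rule expected_sol_bound[OF p k_pos nonneg Sstar_feas])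
  moreover have "Q > 0" using Q_max_ge_1[OF k_pos, of p] by (simp add: Q_def)
  ultimately show ?thesis unfolding Q_def[symmetric] by (simp add: pos_divide_le_eq mult.commute)
qed

end
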